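(* Let $r,n,\delta\ge 2$ be natural numbers, let $m := \max\{\binom{rn-1}{r-1}n^2, \delta\}$ and $N := \binom{m-1}{n-1}$. Let $G$ be the graph with vertices $v_{i,j,k}$ for $i\in[n]$, $j\in[N]$, $k\in[m]$, and vertices $s_{i,X}$ for $i\in[n]$ and $X\subseteq[m]$ with $|X|=n$, whose edges are: $v_{i,j,k}v_{i',j',k'}$ whenever $i\neq i'$ and $k=k'$; and $s_{i,X}v_{i,j,k}$ whenever $k\in X$ (for all $j\in[N]$). Then $\chi_r(G)=rn$.
   Context: $[t]=\{1,\dots,t\}$. There are no other edges in $G$ than those listed. A proper $k$-colouring of a graph $G$ is a map $c\colon V(G)\to[k]$ with $c(u)\neq c(v)$ for every edge $uv$. An $r$-dynamic $k$-colouring is a proper $k$-colouring $c$ such that for every vertex $v$, $|c(N(v))|\ge\min\{r,d(v)\}$, where $N(v)$ is the neighbourhood and $d(v)$ the degree of $v$. $\chi_r(G)$ is the least $k$ for which $G$ has an $r$-dynamic $k$-colouring. *)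

theory Defs
  imports Main
begin

text \<open>A graph is given by a vertex set Vs and a symmetric irreflexive adjacency relation E.\<close>

definition nbhd :: "'a set \<Rightarrow> ('a \<Rightarrow> 'a \<Rightarrow> bool) \<Rightarrow> 'a \<Rightarrow> 'a set" where
  "nbhd Vs E v = {u \<in> Vs. E v u}"

definition degree :: "'a set \<Rightarrow> ('a \<Rightarrow> 'a \<Rightarrow> bool) \<Rightarrow> 'a \<Rightarrow> nat" where
  "degree Vs E v = card (nbhd Vs E v)"

definition proper_colouring :: "'a set \<Rightarrow> ('a \<Rightarrow> 'a \<Rightarrow> bool) \<Rightarrow> nat \<Rightarrow> ('a \<Rightarrow> nat) \<Rightarrow> bool" where
  "proper_colouring Vs E k c \<longleftrightarrow>
     c ` Vs \<subseteq> {1..k} \<and> (\<forall>u\<in>Vs. \<forall>v\<in>Vs. E u v \<longrightarrow> c u \<noteq> c v)"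

definition r_dynamic_colouring ::
  "'a set \<Rightarrow> ('a \<Rightarrow> 'a \<Rightarrow> bool) \<Rightarrow> nat \<Rightarrow> nat \<Rightarrow> ('a \<Rightarrow> nat) \<Rightarrow> bool" where
  "r_dynamic_colouring Vs E r k c \<longleftrightarrow>
     proper_colouring Vs E k c \<and>
     (\<forall>v\<in>Vs. card (c ` nbhd Vs E v) \<ge> min r (degree Vs E v))"

definition dyn_chromatic :: "'a set \<Rightarrow> ('a \<Rightarrow> 'a \<Rightarrow> bool) \<Rightarrow> nat \<Rightarrow> nat" where
  "dyn_chromatic Vs E r = (LEAST k. \<exists>c. r_dynamic_colouring Vs E r k c)"

datatype vert = Vv nat nat nat | Sv nat "nat set"

definition G_verts :: "nat \<Rightarrow> nat \<Rightarrow> nat \<Rightarrow> vert set" where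
  "G_verts n N m =
     {Vv i j k | i j k. i \<in> {1..n} \<and> j \<in> {1..N} \<and> k \<in> {1..m}} \<union>
     {Sv i X | i X. i \<in> {1..n} \<and> X \<subseteq> {1..m} \<and> card X = n}"

fun G_adj0 :: "vert \<Rightarrow> vert \<Rightarrow> bool" where
  "G_adj0 (Vv i j k) (Vv i' j' k') = (i \<noteq> i' \<and> k = k')"
| "G_adj0 (Sv i X) (Vv i' j k) = (i = i' \<and> k \<in> X)"
| "G_adj0 _ _ = False"

definition G_adj :: "vert \<Rightarrow> vert \<Rightarrow> bool" where
  "G_adj u v \<longleftrightarrow> G_adj0 u v \<or> G_adj0 v u"

end

theory Submission
  imports Defs Complex_Main
begin

text \<open>Upper bound: split the colours into n blocks of r. The vertices v_{i,j,k} of class i take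
  the colours of block i cyclically in j, so every column {v_{i,j,k} : j \<in> [N]} shows a whole
  block (as N \<ge> r); s_{i,X} takes a colour from the block of the next class.

  Lower bound: suppose fewer than rn colours are used. Call a column of class i poor if it shows
  fewer than r colours. Its colour set then lies in one of the binom(rn-1, r-1) sets of r-1 colours,
  so by pigeonhole if class i had more than (n-1) binom(rn-1, r-1) poor columns, some n of them X
  would fit into a common (r-1)-set, and s_{i,X}, of degree nN \<ge> r, would see fewer than r colours.
  Since m exceeds n(n-1) binom(rn-1, r-1), some column k is poor for no class; the n colour sets
  on column k are pairwise disjoint (the classes are mutually adjacent there), giving rn colours.\<close>

lemma dyn_chromatic_eqI:
  assumes "r_dynamic_colouring Vs E r k c"
    and "\<And>k' c'. r_dynamic_colouring Vs E r k' c' \<Longrightarrow> k \<le> k'"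
  shows "dyn_chromatic Vs E r = k"
  unfolding dyn_chromatic_def using assms by (blast intro: Least_equality)

lemma r_dynamic_colouringI:
  assumes "proper_colouring Vs E k c"
    and "\<And>v. v \<in> Vs \<Longrightarrow> r \<le> card (c ` nbhd Vs E v)"
  shows "r_dynamic_colouring Vs E r k c"
  using assms unfolding r_dynamic_colouring_def by (auto intro: le_trans[OF min.cobounded1])

lemma r_dynamic_colouring_sees_r_colours:
  assumes "r_dynamic_colouring Vs E r k c" "v \<in> Vs" "r \<le> degree Vs E v"
  shows "r \<le> card (c ` nbhd Vs E v)"
  using assms unfolding r_dynamic_colouring_def by force

lemma pigeonhole_card:
  assumes "finite S" "f ` A \<subseteq> S" "card S * q < card A"
  obtains y where "y \<in> S" "q < card {x \<in> A. f x = y}"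
proof -
  have "\<exists>y\<in>S. q < card {x \<in> A. f x = y}"
  proof (rule ccontr)
    assume "\<not> ?thesis"
    then have few: "card {x \<in> A. f x = y} \<le> q" if "y \<in> S" for y
      using that by (meson not_le)
    have "A = (\<Union>y\<in>S. {x \<in> A. f x = y})" using assms(2) by auto
    then have "card A = card (\<Union>y\<in>S. {x \<in> A. f x = y})" by simp
    also have "\<dots> \<le> (\<Sum>y\<in>S. card {x \<in> A. f x = y})"
      by (rule card_UN_le[OF assms(1)])
    also have "\<dots> \<le> card S * q" using sum_bounded_above[of S _ q] few by simp
    finally show False using assms(3) by simp
  qed
  then show thesis using that by blast
qed

lemma small_sets_common_superset:
  assumes U: "finite U" "s \<le> card U"
    and F: "\<And>x. x \<in> A \<Longrightarrow> F x \<subseteq> U \<and> card (F x) \<le> s"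
    and many: "(card U choose s) * q < card A"
  obtains X T where "X \<subseteq> A" "card X = Suc q" "T \<subseteq> U" "card T = s"
    "\<And>x. x \<in> X \<Longrightarrow> F x \<subseteq> T"
proof -
  define S where "S = {T. T \<subseteq> U \<and> card T = s}"
  define pad where "pad x = (SOME T. F x \<subseteq> T \<and> T \<subseteq> U \<and> card T = s)" for x
  have pad: "F x \<subseteq> pad x \<and> pad x \<in> S" if "x \<in> A" for x
  proof -
    have "\<exists>T. F x \<subseteq> T \<and> T \<subseteq> U \<and> card T = s"
      using F[OF that] U by (intro exists_subset_between) auto
    then have "F x \<subseteq> pad x \<and> pad x \<subseteq> U \<and> card (pad x) = s"
      unfolding pad_def by (rule someI_ex)
    then show ?thesis unfolding S_def by simp
  qed
  have "finite S" unfolding S_def using U by (simp add: finite_Collect_subsets)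
  moreover have "card S = card U choose s" unfolding S_def by (rule n_subsets[OF U(1)])
  ultimately obtain T where T: "T \<in> S" "q < card {x \<in> A. pad x = T}"
    using pigeonhole_card[of S pad A q] pad many by auto
  then obtain X where "X \<subseteq> {x \<in> A. pad x = T}" "card X = Suc q"
    by (metis Suc_leI obtain_subset_with_card_n)
  with T pad show thesis by (intro that[of X T]) (auto simp: S_def)
qed

lemma Vv_in_G_verts [simp]:
  "Vv i j k \<in> G_verts n N m \<longleftrightarrow> i \<in> {1..n} \<and> j \<in> {1..N} \<and> k \<in> {1..m}"
  by (auto simp: G_verts_def)

lemma Sv_in_G_verts [simp]:
  "Sv i X \<in> G_verts n N m \<longleftrightarrow> i \<in> {1..n} \<and> X \<subseteq> {1..m} \<and> card X = n"
  by (auto simp: G_verts_def)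

lemma G_adj_simps [simp]:
  "G_adj (Vv i j k) (Vv i' j' k') \<longleftrightarrow> i \<noteq> i' \<and> k = k'"
  "G_adj (Sv i X) (Vv i' j k) \<longleftrightarrow> i = i' \<and> k \<in> X"
  "G_adj (Vv i' j k) (Sv i X) \<longleftrightarrow> i = i' \<and> k \<in> X"
  "\<not> G_adj (Sv i X) (Sv i' X')"
  by (auto simp: G_adj_def)

definition column :: "nat \<Rightarrow> nat \<Rightarrow> nat \<Rightarrow> vert set" where
  "column N i k = (\<lambda>j. Vv i j k) ` {1..N}"

lemma finite_column [simp]: "finite (column N i k)"
  by (simp add: column_def)

lemma card_column: "card (column N i k) = N"
  unfolding column_def by (subst card_image) (auto simp: inj_on_def)

lemma column_subset_G_verts:
  "i \<in> {1..n} \<Longrightarrow> k \<in> {1..m} \<Longrightarrow> column N i k \<subseteq> G_verts n N m"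
  by (auto simp: column_def)

lemma column_subset_nbhd:
  assumes "v \<in> G_verts n N m" "i \<in> {1..n}" "k \<in> {1..m}" "\<And>j. G_adj v (Vv i j k)"
  shows "column N i k \<subseteq> nbhd (G_verts n N m) G_adj v"
  using assms by (auto simp: column_def nbhd_def)

lemma nbhd_Sv:
  assumes "i \<in> {1..n}" "X \<subseteq> {1..m}"
  shows "nbhd (G_verts n N m) G_adj (Sv i X) = (\<Union>k\<in>X. column N i k)"
proof (rule set_eqI)
  fix u show "u \<in> nbhd (G_verts n N m) G_adj (Sv i X) \<longleftrightarrow> u \<in> (\<Union>k\<in>X. column N i k)"
    using assms by (cases u) (auto simp: nbhd_def column_def image_iff)
qed

lemma degree_Sv:
  assumes "i \<in> {1..n}" "X \<subseteq> {1..m}"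
  shows "degree (G_verts n N m) G_adj (Sv i X) = N * card X"
proof -
  have "finite X" using assms(2) finite_subset by blast
  have "card (\<Union>k\<in>X. column N i k) = (\<Sum>k\<in>X. card (column N i k))"
    using \<open>finite X\<close> by (intro card_UN_disjoint) (auto simp: column_def)
  then show ?thesis using assms by (simp add: degree_def nbhd_Sv card_column)
qed

lemma few_poor_columns:
  assumes c: "r_dynamic_colouring (G_verts n N m) G_adj r K c"
    and "1 \<le> r" "1 \<le> n" "r \<le> N" "K < r * n" and i: "i \<in> {1..n}"
  shows "card {k \<in> {1..m}. card (c ` column N i k) < r} \<le> (n - 1) * ((r * n - 1) choose (r - 1))"
proof (rule ccontr)
  let ?V = "G_verts n N m"
  let ?U = "{1..r * n - 1}"
  let ?P = "{k \<in> {1..m}. card (c ` column N i k) < r}"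
  assume "\<not> ?thesis"
  then have many: "(card ?U choose (r - 1)) * (n - 1) < card ?P"
    by (simp add: mult.commute)
  have F: "c ` column N i k \<subseteq> ?U \<and> card (c ` column N i k) \<le> r - 1" if k: "k \<in> ?P" for k
  proof
    have "c ` column N i k \<subseteq> c ` ?V" using column_subset_G_verts[OF i] k by blast
    also have "\<dots> \<subseteq> {1..K}" using c by (simp add: r_dynamic_colouring_def proper_colouring_def)
    also have "\<dots> \<subseteq> ?U" using \<open>K < r * n\<close> by auto
    finally show "c ` column N i k \<subseteq> ?U" .
    show "card (c ` column N i k) \<le> r - 1" using k by auto
  qed
  have rU: "r - 1 \<le> card ?U" using \<open>1 \<le> n\<close> by (simp add: diff_le_mono)
  obtain X T where "X \<subseteq> ?P" "card X = Suc (n - 1)"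
    and T: "T \<subseteq> ?U" "card T = r - 1" and cover: "\<And>k. k \<in> X \<Longrightarrow> c ` column N i k \<subseteq> T"
    using small_sets_common_superset[OF finite_atLeastAtMost rU, of ?P "\<lambda>k. c ` column N i k" "n - 1"]
      F many by blast
  then have Xm: "X \<subseteq> {1..m}" and "card X = n" using \<open>1 \<le> n\<close> by auto
  have "r \<le> degree ?V G_adj (Sv i X)"
    using degree_Sv[OF i Xm] \<open>card X = n\<close> \<open>r \<le> N\<close> \<open>1 \<le> n\<close>
    by (metis le_trans mult.right_neutral mult_le_mono2)
  then have "r \<le> card (c ` nbhd ?V G_adj (Sv i X))"
    using r_dynamic_colouring_sees_r_colours[OF c] i Xm \<open>card X = n\<close> by simp
  also have "\<dots> \<le> card T"
  proof (rule card_mono)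
    show "finite T" using T(1) finite_subset by blast
    show "c ` nbhd ?V G_adj (Sv i X) \<subseteq> T" using cover by (auto simp: nbhd_Sv[OF i Xm])
  qed
  finally show False using T \<open>1 \<le> r\<close> by simp
qed

lemma rich_column_forces_colours:
  assumes c: "proper_colouring (G_verts n N m) G_adj K c" and k: "k \<in> {1..m}"
    and rich: "\<And>i. i \<in> {1..n} \<Longrightarrow> r \<le> card (c ` column N i k)"
  shows "n * r \<le> K"
proof -
  have disjoint: "c ` column N i k \<inter> c ` column N i' k = {}"
    if "i \<in> {1..n}" "i' \<in> {1..n}" "i \<noteq> i'" for i i'
    using c that k unfolding proper_colouring_def column_def by fastforce
  have "n * r \<le> (\<Sum>i\<in>{1..n}. card (c ` column N i k))"
    using sum_bounded_below[of "{1..n}" r] rich by simp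
  also have "\<dots> = card (\<Union>i\<in>{1..n}. c ` column N i k)"
    using disjoint by (intro card_UN_disjoint[symmetric]) auto
  also have "\<dots> \<le> card {1..K}"
  proof (rule card_mono)
    show "(\<Union>i\<in>{1..n}. c ` column N i k) \<subseteq> {1..K}"
        using c column_subset_G_verts[OF _ k] unfolding proper_colouring_def
      by (meson UN_least image_mono order_trans)
  qed simp
  finally show ?thesis by simp
qed

lemma r_dynamic_colouring_lower_bound:
  assumes c: "r_dynamic_colouring (G_verts n N m) G_adj r K c"
    and "1 \<le> r" "1 \<le> n" "r \<le> N"
    and m: "n * (n - 1) * ((r * n - 1) choose (r - 1)) < m"
  shows "r * n \<le> K"
proof (rule ccontr)
  assume "\<not> r * n \<le> K"
  define poor where "poor i = {k \<in> {1..m}. card (c ` column N i k) < r}" for i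
  have few: "card (poor i) \<le> (n - 1) * ((r * n - 1) choose (r - 1))" if "i \<in> {1..n}" for i
    unfolding poor_def using few_poor_columns[OF c assms(2-4) _ that] \<open>\<not> r * n \<le> K\<close> by simp
  have "card (\<Union>i\<in>{1..n}. poor i) \<le> (\<Sum>i\<in>{1..n}. card (poor i))"
    by (rule card_UN_le) simp
  also have "\<dots> \<le> n * ((n - 1) * ((r * n - 1) choose (r - 1)))"
    using sum_bounded_above[of "{1..n}" "\<lambda>i. card (poor i)"] few by simp
  also have "\<dots> < card {1..m}" using m by (simp add: mult.assoc)
  finally have "(\<Union>i\<in>{1..n}. poor i) \<noteq> {1..m}" by auto
  moreover have "(\<Union>i\<in>{1..n}. poor i) \<subseteq> {1..m}" unfolding poor_def by auto
  ultimately obtain k where k: "k \<in> {1..m}" "k \<notin> (\<Union>i\<in>{1..n}. poor i)" by blast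
  have "n * r \<le> K"
    using c k by (intro rich_column_forces_colours[of n N m K c k r])
      (auto simp: r_dynamic_colouring_def poor_def not_less)
  then show False using \<open>\<not> r * n \<le> K\<close> by (simp add: mult.commute)
qed

fun block_colouring :: "nat \<Rightarrow> nat \<Rightarrow> vert \<Rightarrow> nat" where
  "block_colouring r n (Vv i j k) = (i - 1) * r + (j - 1) mod r + 1"
| "block_colouring r n (Sv i X) = (i mod n) * r + 1"

lemma mod_ne_pred: "1 \<le> i \<Longrightarrow> i \<le> n \<Longrightarrow> 2 \<le> n \<Longrightarrow> i mod n \<noteq> i - 1"
  for i n :: nat
  by (cases "i = n") auto

lemma block_colouring_range:
  assumes "0 < r" "v \<in> G_verts n N m"
  shows "block_colouring r n v \<in> {1..r * n}"
proof (cases v)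
  case (Vv i j k)
  then have "1 \<le> i" "i \<le> n" using assms(2) by auto
  have "(j - 1) mod r < r" using assms(1) by simp
  then have "block_colouring r n v \<le> (i - 1) * r + r" using Vv by simp
  also have "\<dots> = i * r" using \<open>1 \<le> i\<close> by (cases i) auto
  also have "\<dots> \<le> r * n" using \<open>i \<le> n\<close> by (simp add: mult.commute)
  finally show ?thesis using Vv by simp
next
  case (Sv i X)
  then have "n \<noteq> 0" using assms(2) by auto
  then have "Suc (i mod n) * r \<le> n * r" by (intro mult_le_mono1) (simp add: Suc_leI)
  then show ?thesis using Sv assms(1) by (simp add: mult.commute)
qed

lemma block_colouring_proper:
  assumes "0 < r" "2 \<le> n"
  shows "proper_colouring (G_verts n N m) G_adj (r * n) (block_colouring r n)"
  unfolding proper_colouring_def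
proof (intro conjI ballI impI)
  show "block_colouring r n ` G_verts n N m \<subseteq> {1..r * n}"
    using block_colouring_range[OF assms(1)] by blast
  fix u v assume uv: "u \<in> G_verts n N m" "v \<in> G_verts n N m" "G_adj u v"
  have "(block_colouring r n u - 1) div r \<noteq> (block_colouring r n v - 1) div r"
    using uv mod_ne_pred[OF _ _ assms(2)] not_sym[OF mod_ne_pred[OF _ _ assms(2)]]
    by (cases u; cases v) (auto simp: assms(1))
  then show "block_colouring r n u \<noteq> block_colouring r n v" by metis
qed

lemma card_block_colouring_column:
  assumes "r \<le> N"
  shows "r \<le> card (block_colouring r n ` column N i k)"
proof -
  have "{(i - 1) * r + 1 .. (i - 1) * r + r} \<subseteq> block_colouring r n ` column N i k"
  proof
    fix x assume x: "x \<in> {(i - 1) * r + 1 .. (i - 1) * r + r}"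
    then have "x = block_colouring r n (Vv i (x - (i - 1) * r) k)" by auto
    moreover have "Vv i (x - (i - 1) * r) k \<in> column N i k"
      unfolding column_def by (rule imageI) (use x assms in auto)
    ultimately show "x \<in> block_colouring r n ` column N i k" by blast
  qed
  then have "card {(i - 1) * r + 1 .. (i - 1) * r + r} \<le> card (block_colouring r n ` column N i k)"
    by (intro card_mono) simp_all
  then show ?thesis by simp
qed

lemma column_in_every_nbhd:
  assumes "2 \<le> n" "v \<in> G_verts n N m"
  obtains i k where "column N i k \<subseteq> nbhd (G_verts n N m) G_adj v"
proof (cases v)
  case (Vv i j k)
  moreover have "i mod n + 1 \<le> n" using assms(1) by (simp add: Suc_leI)
  ultimately have "i mod n + 1 \<in> {1..n}" "i mod n + 1 \<noteq> i" "k \<in> {1..m}"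
    using assms mod_ne_pred[of i n] by auto
  then have "column N (i mod n + 1) k \<subseteq> nbhd (G_verts n N m) G_adj v"
    using assms(2) Vv by (intro column_subset_nbhd) auto
  then show thesis by (rule that)
next
  case (Sv i X)
  then have "X \<noteq> {}" using assms by auto
  then obtain k where "k \<in> X" by blast
  then have "column N i k \<subseteq> nbhd (G_verts n N m) G_adj v"
    using assms(2) Sv by (intro column_subset_nbhd) auto
  then show thesis by (rule that)
qed

lemma block_colouring_r_dynamic:
  assumes "0 < r" "2 \<le> n" "r \<le> N"
  shows "r_dynamic_colouring (G_verts n N m) G_adj r (r * n) (block_colouring r n)"
proof (rule r_dynamic_colouringI[OF block_colouring_proper[OF assms(1,2)]])
  fix v assume v: "v \<in> G_verts n N m"
  obtain i k where col: "column N i k \<subseteq> nbhd (G_verts n N m) G_adj v"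
    using column_in_every_nbhd[OF assms(2) v] .
  have "block_colouring r n ` nbhd (G_verts n N m) G_adj v \<subseteq> {1..r * n}"
    using block_colouring_range[OF assms(1)] by (auto simp: nbhd_def)
  then have "finite (block_colouring r n ` nbhd (G_verts n N m) G_adj v)"
    using finite_subset by blast
  then have "card (block_colouring r n ` column N i k)
      \<le> card (block_colouring r n ` nbhd (G_verts n N m) G_adj v)"
    using col by (intro card_mono) auto
  then show "r \<le> card (block_colouring r n ` nbhd (G_verts n N m) G_adj v)"
    by (rule le_trans[OF card_block_colouring_column[OF assms(3)]])
qed

lemma le_choose_of_large:
  fixes r n m :: nat
  assumes "2 \<le> r" "2 \<le> n" "((r * n - 1) choose (r - 1)) * n\<^sup>2 \<le> m"
  shows "r \<le> (m - 1) choose (n - 1)"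
proof -
  have "2 * r \<le> r * n" "2 * n \<le> r * n" using assms(1,2) by simp_all
  then have "r * n - 1 \<le> (r * n - 1) choose (r - 1)"
    using assms(1) by (intro upper_le_binomial) linarith+
  moreover have "4 \<le> n\<^sup>2" using power_mono[OF assms(2), of 2] by simp
  ultimately have "(r * n - 1) * 4 \<le> m" using assms(3) by (meson le_trans mult_le_mono)
  then have "4 * (r * n) - 4 \<le> m" by simp
  with \<open>2 * r \<le> r * n\<close> \<open>2 * n \<le> r * n\<close> have "r \<le> m - 1" "n - 1 < m - 1"
    using assms(1,2) by linarith+
  moreover have "m - 1 \<le> (m - 1) choose (n - 1)"
    using \<open>n - 1 < m - 1\<close> assms(2) by (intro upper_le_binomial) simp_all
  ultimately show ?thesis by linarith
qed

lemma mult_pred_less_of_square_le: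
  fixes n B m :: nat
  assumes "0 < B" "1 \<le> n" "B * n\<^sup>2 \<le> m"
  shows "n * (n - 1) * B < m"
proof -
  have "n * (n - 1) < n\<^sup>2" using assms(2) by (simp add: power2_eq_square)
  then have "n * (n - 1) * B < n\<^sup>2 * B" using assms(1) by simp
  also have "\<dots> \<le> m" using assms(3) by (simp add: mult.commute)
  finally show ?thesis .
qed

theorem lemma2p3:
  fixes r n \<delta> m N :: nat
  assumes "r \<ge> 2" and "n \<ge> 2" and "\<delta> \<ge> 2"
  defines "m \<equiv> max (((r * n - 1) choose (r - 1)) * n ^ 2) \<delta>"
  defines "N \<equiv> (m - 1) choose (n - 1)"
  shows "dyn_chromatic (G_verts n N m) G_adj r = r * n"
proof (rule dyn_chromatic_eqI)
  \<comment> \<open>\<delta> only enlarges m; the argument never needs it.\<close>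
  have m: "((r * n - 1) choose (r - 1)) * n\<^sup>2 \<le> m" unfolding m_def by simp
  have "r \<le> N" unfolding N_def using le_choose_of_large[OF assms(1,2) m] .
  then show "r_dynamic_colouring (G_verts n N m) G_adj r (r * n) (block_colouring r n)"
    using assms(1,2) by (intro block_colouring_r_dynamic) simp_all
  have "0 < (r * n - 1) choose (r - 1)" using assms(1,2) by (simp add: diff_le_mono)
  then have "n * (n - 1) * ((r * n - 1) choose (r - 1)) < m"
    using assms(2) m by (intro mult_pred_less_of_square_le) simp_all
  then show "r * n \<le> K" if "r_dynamic_colouring (G_verts n N m) G_adj r K c" for K c
    using that assms(1,2) \<open>r \<le> N\<close> by (intro r_dynamic_colouring_lower_bound) simp_all
qed

end
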